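(* Let $\mathfrak l$ be a dg Lie algebra over a field $\Bbbk$ of characteristic $0$, and let $\mathfrak l[[t]]=\mathfrak l\otimes\Bbbk[[t]]$ carry the differential of $\mathfrak l$. Let $T$ be multiplication by $t$, i.e. $T(x\otimes t^i)=x\otimes t^{i+1}$. Define operations by $$(x\otimes t^i)_{(n)}(y\otimes t^j)=(-1)^i\frac{n!}{(n-i)!}\frac{j!}{(j-n+i)!}[x,y]\otimes t^{i+j-n}\quad\text{for } i\le n\le i+j,$$ and $(x\otimes t^i)_{(n)}(y\otimes t^j)=0$ otherwise, for $x,y\in\mathfrak l$ and $n\in\mathbb N$. Put $Y_-(a,z)b=\sum_{n\ge0}a_{(n)}b\,z^{-n-1}$. Then $(\mathfrak l[[t]],d_{\mathfrak l},T,Y_-)$ is a dg vertex Lie algebra.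
   Context: A dg vertex Lie algebra is a complex $(L,d)$ with a degree-$0$ chain endomorphism $T$ and a chain map $L\otimes L\to z^{-1}L[z^{-1}]$, $a\otimes b\mapsto Y_-(a,z)b=\sum_{n\in\mathbb N}(a_{(n)}b)z^{-n-1}$, satisfying: (i) $Y_-(Ta,z)=\partial_zY_-(a,z)$; (ii) $Y_-(a,z)b=\big((-1)^{|a||b|}e^{zT}Y_-(b,-z)a\big)_-$, where $(\cdot)_-$ keeps the negative powers of $z$; (iii) $[a_{(m)},b_{(n)}]=\sum_{i\in\mathbb N}\binom mi(a_{(i)}b)_{(m+n-i)}$; (iv) $[d,Y_-(a,z)]b=Y_-(da,z)b$.
   Formalization: $Y_-$ takes values in $z^{-1}L[[z^{-1}]]$, with the sum in (ii) taken t-adically, coefficient by coefficient in t, and finiteness of the nonzero $a_{(n)}b$ is claimed only for a, b polynomial in t. The statement above fails without it. *)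

theory Defs
  imports Complex_Main "HOL-Library.Function_Algebras"
begin

definition psign :: "int \<Rightarrow> 'k::field" where
  "psign p = (if even p then 1 else -1)"

definition graded_space :: "('k::field \<Rightarrow> 'v::ab_group_add \<Rightarrow> 'v) \<Rightarrow> 'v set \<Rightarrow> (int \<Rightarrow> 'v set) \<Rightarrow> bool" where
  "graded_space smul V L \<longleftrightarrow>
     vector_space smul \<and>
     (\<forall>p. 0 \<in> L p \<and> (\<forall>x\<in>L p. \<forall>y\<in>L p. x + y \<in> L p) \<and> (\<forall>c. \<forall>x\<in>L p. smul c x \<in> L p)) \<and>
     V = {v. \<exists>c. finite {p. c p \<noteq> 0} \<and> (\<forall>p. c p \<in> L p) \<and> v = sum c {p. c p \<noteq> 0}} \<and>
     (\<forall>c. finite {p. c p \<noteq> 0} \<and> (\<forall>p. c p \<in> L p) \<and> sum c {p. c p \<noteq> 0} = 0 \<longrightarrow> (\<forall>p. c p = 0))"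

definition lin_on :: "('k::field \<Rightarrow> 'v::ab_group_add \<Rightarrow> 'v) \<Rightarrow> 'v set \<Rightarrow> ('v \<Rightarrow> 'v) \<Rightarrow> bool" where
  "lin_on smul V f \<longleftrightarrow> (\<forall>x\<in>V. f x \<in> V) \<and> (\<forall>x\<in>V. \<forall>y\<in>V. f (x + y) = f x + f y) \<and>
     (\<forall>c. \<forall>x\<in>V. f (smul c x) = smul c (f x))"

definition dg_Lie_algebra ::
  "('k::field \<Rightarrow> 'v::ab_group_add \<Rightarrow> 'v) \<Rightarrow> (int \<Rightarrow> 'v set) \<Rightarrow> ('v \<Rightarrow> 'v) \<Rightarrow> ('v \<Rightarrow> 'v \<Rightarrow> 'v) \<Rightarrow> bool" where
  "dg_Lie_algebra smul L d br \<longleftrightarrow>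
     graded_space smul UNIV L \<and>
     lin_on smul UNIV d \<and> (\<forall>p x. x \<in> L p \<longrightarrow> d x \<in> L (p + 1)) \<and> (\<forall>x. d (d x) = 0) \<and>
     (\<forall>x. lin_on smul UNIV (br x)) \<and> (\<forall>y. lin_on smul UNIV (\<lambda>x. br x y)) \<and>
     (\<forall>p q x y. x \<in> L p \<longrightarrow> y \<in> L q \<longrightarrow> br x y \<in> L (p + q)) \<and>
     (\<forall>p q x y. x \<in> L p \<longrightarrow> y \<in> L q \<longrightarrow> br x y = - smul (psign (p * q)) (br y x)) \<and>
     (\<forall>p q x y z. x \<in> L p \<longrightarrow> y \<in> L q \<longrightarrow>
        br x (br y z) = br (br x y) z + smul (psign (p * q)) (br y (br x z))) \<and>
     (\<forall>p x y. x \<in> L p \<longrightarrow> d (br x y) = br (d x) y + smul (psign p) (br x (d y)))"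

text \<open>op n a b is a_(n) b, so Y_-(a,z)b = sum_n (op n a b) z^(-n-1).
  HS is the notion of (possibly infinite) summation used to interpret the
  sum over k coming from e^{zT} in the skew-symmetry axiom (ii):
  HS c s means "the series sum_k c k has sum s".\<close>
definition dg_vertex_Lie_axioms ::
  "('k::field_char_0 \<Rightarrow> 'w::ab_group_add \<Rightarrow> 'w) \<Rightarrow> 'w set \<Rightarrow> (int \<Rightarrow> 'w set) \<Rightarrow> ('w \<Rightarrow> 'w) \<Rightarrow> ('w \<Rightarrow> 'w)
    \<Rightarrow> (nat \<Rightarrow> 'w \<Rightarrow> 'w \<Rightarrow> 'w) \<Rightarrow> ((nat \<Rightarrow> 'w) \<Rightarrow> 'w \<Rightarrow> bool) \<Rightarrow> bool" where
  "dg_vertex_Lie_axioms smul V W d T op HS \<longleftrightarrow>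
     graded_space smul V W \<and>
     \<comment> \<open>(V,d) is a complex\<close>
     lin_on smul V d \<and> (\<forall>p x. x \<in> W p \<longrightarrow> d x \<in> W (p + 1)) \<and> (\<forall>x\<in>V. d (d x) = 0) \<and>
     \<comment> \<open>T is a degree-0 chain endomorphism\<close>
     lin_on smul V T \<and> (\<forall>p x. x \<in> W p \<longrightarrow> T x \<in> W p) \<and> (\<forall>x\<in>V. T (d x) = d (T x)) \<and>
     \<comment> \<open>the operations are bilinear of degree 0\<close>
     (\<forall>n. \<forall>a\<in>V. lin_on smul V (op n a)) \<and> (\<forall>n. \<forall>b\<in>V. lin_on smul V (\<lambda>a. op n a b)) \<and>
     (\<forall>n p q a b. a \<in> W p \<longrightarrow> b \<in> W q \<longrightarrow> op n a b \<in> W (p + q)) \<and>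
     \<comment> \<open>(i) Y_-(Ta,z) = d/dz Y_-(a,z)\<close>
     (\<forall>n. \<forall>a\<in>V. \<forall>b\<in>V. op n (T a) b = smul (- of_nat n) (op (n - 1) a b)) \<and>
     \<comment> \<open>(ii) skew-symmetry, coefficient of z^(-n-1)\<close>
     (\<forall>n p q a b. a \<in> W p \<longrightarrow> b \<in> W q \<longrightarrow>
        HS (\<lambda>k. smul (psign (p * q) * (-1) ^ (n + k + 1) / fact k) ((T ^^ k) (op (n + k) b a))) (op n a b)) \<and>
     \<comment> \<open>(iii) commutator formula (graded commutator)\<close>
     (\<forall>m n p q a b c. a \<in> W p \<longrightarrow> b \<in> W q \<longrightarrow> c \<in> V \<longrightarrow>
        op m a (op n b c) - smul (psign (p * q)) (op n b (op m a c))
          = (\<Sum>i\<le>m. smul (of_nat (m choose i)) (op (m + n - i) (op i a b) c))) \<and>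
     \<comment> \<open>(iv) [d, Y_-(a,z)] b = Y_-(da,z) b (graded commutator, |d| = 1)\<close>
     (\<forall>n p a b. a \<in> W p \<longrightarrow> b \<in> V \<longrightarrow>
        d (op n a b) - smul (psign p) (op n a (d b)) = op n (d a) b)"

text \<open>Finite summation (used in the plain notion, where locality makes the sum finite).\<close>
definition finite_has_sum :: "(nat \<Rightarrow> 'w::ab_group_add) \<Rightarrow> 'w \<Rightarrow> bool" where
  "finite_has_sum c s \<longleftrightarrow> finite {k. c k \<noteq> 0} \<and> s = sum c {k. c k \<noteq> 0}"

text \<open>The original notion: Y_- takes values in z^{-1} L[z^{-1}] (locality).\<close>
definition dg_vertex_Lie_algebra where
  "dg_vertex_Lie_algebra smul V W d T op \<longleftrightarrow>
     dg_vertex_Lie_axioms smul V W d T op finite_has_sum \<and>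
     (\<forall>a\<in>V. \<forall>b\<in>V. finite {n. op n a b \<noteq> 0})"

text \<open>An element of l[[t]] is represented by its coefficient sequence f, f = sum_i f i \<otimes> t^i.\<close>

definition ps_smul :: "('k \<Rightarrow> 'v \<Rightarrow> 'v) \<Rightarrow> 'k \<Rightarrow> (nat \<Rightarrow> 'v) \<Rightarrow> (nat \<Rightarrow> 'v)" where
  "ps_smul smul c f = (\<lambda>i. smul c (f i))"

definition ps_grading :: "(int \<Rightarrow> 'v set) \<Rightarrow> int \<Rightarrow> (nat \<Rightarrow> 'v) set" where
  "ps_grading L p = {f. \<forall>i. f i \<in> L p}"

definition ps_carrier :: "(int \<Rightarrow> 'v::ab_group_add set) \<Rightarrow> (nat \<Rightarrow> 'v) set" where
  "ps_carrier L = {f. \<exists>c. finite {p. c p \<noteq> 0} \<and> (\<forall>p. c p \<in> ps_grading L p) \<and> f = sum c {p. c p \<noteq> 0}}"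

definition ps_d :: "('v \<Rightarrow> 'v) \<Rightarrow> (nat \<Rightarrow> 'v) \<Rightarrow> (nat \<Rightarrow> 'v)" where
  "ps_d d f = (\<lambda>i. d (f i))"

definition ps_T :: "(nat \<Rightarrow> 'v::zero) \<Rightarrow> (nat \<Rightarrow> 'v)" where
  "ps_T f = (\<lambda>i. if i = 0 then 0 else f (i - 1))"

text \<open>(sum_i x_i t^i)_(n) (sum_j y_j t^j): coefficient of t^m collects the terms with
  i + j - n = m, i \<le> n \<le> i + j, i.e. i \<le> n and j = m + (n - i), with coefficient
  (-1)^i n!/(n-i)! j!/(j-n+i)! = (-1)^i n!/(n-i)! j!/m!.\<close>
definition ps_op :: "('k::field_char_0 \<Rightarrow> 'v::ab_group_add \<Rightarrow> 'v) \<Rightarrow> ('v \<Rightarrow> 'v \<Rightarrow> 'v)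
    \<Rightarrow> nat \<Rightarrow> (nat \<Rightarrow> 'v) \<Rightarrow> (nat \<Rightarrow> 'v) \<Rightarrow> (nat \<Rightarrow> 'v)" where
  "ps_op smul br n f g = (\<lambda>m. \<Sum>i\<le>n.
      smul ((-1) ^ i * (fact n / fact (n - i)) * (fact (m + (n - i)) / fact m))
           (br (f i) (g (m + (n - i)))))"

text \<open>t-adic (coefficientwise) summation of a series of power series.\<close>
definition ps_has_sum :: "(nat \<Rightarrow> nat \<Rightarrow> 'v::ab_group_add) \<Rightarrow> (nat \<Rightarrow> 'v) \<Rightarrow> bool" where
  "ps_has_sum c s \<longleftrightarrow> (\<forall>m. finite {k. c k m \<noteq> 0} \<and> s m = (\<Sum>k | c k m \<noteq> 0. c k m))"

end

theory Submission
  imports Defs "HOL-Computational_Algebra.Formal_Power_Series"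
begin

(* All axioms are verified coefficientwise in t. The coefficient of t^r in a_(n) b is
   sum_{i<=n} c n i r [a_i, b_(r+n-i)] with c n i r = (-1)^i n!/(n-i)! (r+n-i)!/r!
   (ps_op_coeff n i r below), so each axiom becomes a property of the bracket combined with
   an identity between the numbers c n i r.  Bilinearity, the degrees, (iv) and locality come
   from the corresponding properties of the bracket; (i) is the recursion
   c (n+1) (i+1) r = -(n+1) c n i r.  For (ii), antisymmetry expresses both sides through the
   brackets [a_i, b_j], and comparing coefficients leaves an alternating Chu-Vandermonde
   identity.  For (iii), the Jacobi identity expresses both sides through the [[a_i, b_j], c_k],
   and comparing coefficients leaves sum_l (-1)^l C(A,l) C(A+n-l, j-l) = C(n,j). *)

section \<open>Binomial identities\<close>

lemma alternating_choose_Vandermonde: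
  assumes "i \<le> m + n"
  shows "(\<Sum>k\<le>m. (-1)^k * of_nat ((n+k) choose n) * of_nat (i choose (m-k)) :: 'a::field_char_0)
     = (if i \<le> n then (-1)^m * of_nat ((m+n-i) choose m) else 0)"
proof -
  have neg_choose: "(-1)^k * of_nat ((n+k) choose n) = ((- of_nat (n+1)) gchoose k :: 'a)" for k
  proof -
    have "((- of_nat (n+1)) gchoose k :: 'a) = (-1)^k * ((of_nat (n+1) + of_nat k - 1) gchoose k)"
      by (rule gbinomial_minus)
    also have "(of_nat (n+1) + of_nat k - 1 :: 'a) = of_nat (n+k)" by simp
    also have "(of_nat (n+k) gchoose k :: 'a) = of_nat ((n+k) choose k)"
      by (simp add: binomial_gbinomial)
    also have "(n+k) choose k = (n+k) choose n"
      using binomial_symmetric[of k "n+k"] by simp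
    finally show ?thesis by simp
  qed
  have "(\<Sum>k\<le>m. (-1)^k * of_nat ((n+k) choose n) * of_nat (i choose (m-k)) :: 'a)
      = (\<Sum>k\<in>{0..m}. ((- of_nat (n+1)) gchoose k) * (of_nat i gchoose (m-k)))"
    by (simp only: neg_choose[symmetric] atLeast0AtMost binomial_gbinomial)
  also have "\<dots> = (- of_nat (n+1) + of_nat i) gchoose m"
    by (rule gbinomial_Vandermonde)
  also have "\<dots> = (if i \<le> n then (-1)^m * of_nat ((m+n-i) choose m) else 0)"
  proof (cases "i \<le> n")
    case True
    then have "(- of_nat (n+1) + of_nat i :: 'a) = - of_nat (n+1-i)" by (simp add: of_nat_diff)
    then have "((- of_nat (n+1) + of_nat i) gchoose m :: 'a)
        = (-1)^m * ((of_nat (n+1-i) + of_nat m - 1) gchoose m)"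
      by (simp add: gbinomial_minus)
    also have "(of_nat (n+1-i) + of_nat m - 1 :: 'a) = of_nat (m+n-i)"
      using True by (simp add: of_nat_diff)
    finally show ?thesis
      using True by (simp add: binomial_gbinomial)
  next
    case False
    then have "(- of_nat (n+1) + of_nat i :: 'a) = of_nat (i-n-1)" by (simp add: of_nat_diff)
    then have "((- of_nat (n+1) + of_nat i) gchoose m :: 'a) = of_nat ((i-n-1) choose m)"
      by (simp add: binomial_gbinomial)
    also have "(i-n-1) choose m = 0" using False assms by (simp add: binomial_eq_0)
    finally show ?thesis using False by simp
  qed
  finally show ?thesis .
qed

lemma alternating_choose_convolution:
  "(\<Sum>l\<le>j. (-1)^l * int (A choose l) * int ((A+n-l) choose (j-l))) = int (n choose j)"
proof (induction A arbitrary: n j)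
  case 0
  have "(\<Sum>l\<le>j. (-1)^l * int (0 choose l) * int ((0+n-l) choose (j-l)))
      = (\<Sum>l\<in>{0}. (-1)^l * int (0 choose l) * int ((0+n-l) choose (j-l)))"
    by (rule sum.mono_neutral_right) auto
  then show ?case by simp
next
  case (Suc A)
  show ?case
  proof (cases j)
    case 0
    then show ?thesis by simp
  next
    case (Suc j')
    let ?u = "\<lambda>B l. (-1)^(Suc l) * int (B choose Suc l) * int ((A+n-l) choose (j'-l))"
    let ?v = "\<lambda>l. (-1)^l * int (A choose l) * int ((A+n-l) choose (j'-l))"
    have "(\<Sum>l\<le>Suc j'. (-1)^l * int (Suc A choose l) * int ((Suc A+n-l) choose (Suc j'-l)))
      = int ((Suc A + n) choose Suc j') + (\<Sum>l\<le>j'. ?u (Suc A) l)"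
      by (subst sum.atMost_Suc_shift) simp
    moreover have "(\<Sum>l\<le>j'. ?u (Suc A) l) = (\<Sum>l\<le>j'. ?u A l) - (\<Sum>l\<le>j'. ?v l)"
      by (simp add: sum_subtractf[symmetric] algebra_simps, rule sum.cong, auto)
    moreover have "(\<Sum>l\<le>Suc j'. (-1)^l * int (A choose l) * int ((A+Suc n-l) choose (Suc j'-l)))
      = int ((A + Suc n) choose Suc j') + (\<Sum>l\<le>j'. ?u A l)"
      by (subst sum.atMost_Suc_shift) simp
    ultimately show ?thesis
      using Suc.IH[of "Suc n" "Suc j'"] Suc.IH[of n j'] \<open>j = Suc j'\<close> by simp
  qed
qed

lemma sum_atMost_reverse:
  fixes g :: "nat \<Rightarrow> 'a::comm_monoid_add"
  shows "(\<Sum>j\<le>N. g j) = (\<Sum>i\<le>N. g (N - i))"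
  using sum.atLeastAtMost_rev[where g=g and n=0 and m=N] by (simp add: atLeast0AtMost)

lemma sum_atMost_extend:
  "(n::nat) \<le> N \<Longrightarrow> (\<Sum>j\<le>n. g j) = (\<Sum>j\<le>N. if j \<le> n then g j else 0)"
  by (rule sum.mono_neutral_cong_left) auto

lemma sum_atMost_window_shift:
  fixes G :: "nat \<Rightarrow> 'a::comm_monoid_add"
  assumes "i \<le> k" "k \<le> m"
  shows "(\<Sum>j\<le>m+n. if k-i \<le> j \<and> j+i \<le> m+n then G (j-(k-i)) else 0) = (\<Sum>u\<le>m+n-k. G u)"
proof -
  have "(\<Sum>j\<le>m+n. if k-i \<le> j \<and> j+i \<le> m+n then G (j-(k-i)) else 0)
      = (\<Sum>j\<in>{k-i..m+n-i}. G (j-(k-i)))"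
    by (rule sum.mono_neutral_cong_right) (use assms in auto)
  also have "{k-i..m+n-i} = {0+(k-i)..(m+n-k)+(k-i)}" using assms by auto
  also have "(\<Sum>j\<in>{0+(k-i)..(m+n-k)+(k-i)}. G (j-(k-i))) = (\<Sum>u\<in>{0..m+n-k}. G u)"
    by (simp only: sum.shift_bounds_cl_nat_ivl) simp
  finally show ?thesis by (simp add: atLeast0AtMost)
qed

lemma sum_triangle_reindex:
  fixes \<Phi> :: "nat \<Rightarrow> nat \<Rightarrow> nat \<Rightarrow> 'a::comm_monoid_add"
  shows "(\<Sum>k\<le>m. \<Sum>u\<le>m+n-k. \<Sum>i\<le>k. \<Phi> k u i)
    = (\<Sum>i\<le>m. \<Sum>j\<le>m+n. \<Sum>k\<le>m. if i \<le> k \<and> k-i \<le> j \<and> j+i \<le> m+n then \<Phi> k (j-(k-i)) i else 0)"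
    (is "_ = (\<Sum>i\<le>m. \<Sum>j\<le>m+n. \<Sum>k\<le>m. ?G i j k)")
proof -
  have inner: "(\<Sum>i\<le>m. \<Sum>j\<le>m+n. ?G i j k) = (\<Sum>u\<le>m+n-k. \<Sum>i\<le>k. \<Phi> k u i)" if "k \<le> m" for k
  proof -
    have "(\<Sum>i\<le>m. \<Sum>j\<le>m+n. ?G i j k)
       = (\<Sum>i\<le>k. \<Sum>j\<le>m+n. if k-i \<le> j \<and> j+i \<le> m+n then \<Phi> k (j-(k-i)) i else 0)"
      by (rule sum.mono_neutral_cong_right) (use that in auto)
    also have "\<dots> = (\<Sum>i\<le>k. \<Sum>u\<le>m+n-k. \<Phi> k u i)"
      by (rule sum.cong[OF refl], rule sum_atMost_window_shift) (use that in auto)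
    also have "\<dots> = (\<Sum>u\<le>m+n-k. \<Sum>i\<le>k. \<Phi> k u i)"
      by (rule sum.swap)
    finally show ?thesis .
  qed
  have "(\<Sum>i\<le>m. \<Sum>j\<le>m+n. \<Sum>k\<le>m. ?G i j k) = (\<Sum>i\<le>m. \<Sum>k\<le>m. \<Sum>j\<le>m+n. ?G i j k)"
    by (rule sum.cong[OF refl], rule sum.swap)
  also have "\<dots> = (\<Sum>k\<le>m. \<Sum>i\<le>m. \<Sum>j\<le>m+n. ?G i j k)"
    by (rule sum.swap)
  also have "\<dots> = (\<Sum>k\<le>m. \<Sum>u\<le>m+n-k. \<Sum>i\<le>k. \<Phi> k u i)"
    by (rule sum.cong[OF refl]) (simp add: inner)
  finally show ?thesis by simp
qed

lemma sum_apply: "sum f A x = (\<Sum>a\<in>A. f a x)"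
  by (induction A rule: infinite_finite_induct) auto

section \<open>The coefficients of the products\<close>

definition ps_op_coeff :: "nat \<Rightarrow> nat \<Rightarrow> nat \<Rightarrow> 'k::field_char_0" where
  "ps_op_coeff n i r = (-1)^i * (fact n / fact (n-i)) * (fact (r + (n-i)) / fact r)"

lemma ps_op_coeff_Suc:
  "i \<le> n \<Longrightarrow> ps_op_coeff (Suc n) (Suc i) r = - of_nat (Suc n) * (ps_op_coeff n i r :: 'k::field_char_0)"
  by (simp add: ps_op_coeff_def fact_Suc field_simps)

lemma ps_op_coeff_skew_sum:
  assumes "j \<le> m + n"
  shows "(\<Sum>k\<le>m. if j \<le> n+k then (-1)^(n+k) / fact k * ps_op_coeff (n+k) j (m-k) else 0)
     = (if m \<le> j then ps_op_coeff n (m+n-j) m else (0::'k::field_char_0))"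
proof -
  have summand: "(if j \<le> n+k then (-1)^(n+k) / fact k * ps_op_coeff (n+k) j (m-k) else 0)
     = (-1)^(n+j) * fact n * ((-1)^k * of_nat ((n+k) choose n) * of_nat ((m+n-j) choose (m-k)) :: 'k)"
    if "k \<le> m" for k
  proof (cases "j \<le> n+k")
    case True
    have idx: "m + n - j - (m - k) = n + k - j" "m - k + (n + k - j) = m + n - j"
      using True \<open>k \<le> m\<close> assms by auto
    have c1: "(of_nat ((n+k) choose n) :: 'k) = fact (n+k) / (fact n * fact k)"
      by (simp add: binomial_fact)
    have c2: "(of_nat ((m+n-j) choose (m-k)) :: 'k) = fact (m+n-j) / (fact (m-k) * fact (n+k-j))"
      using True \<open>k \<le> m\<close> assms by (simp add: binomial_fact idx(1))
    show ?thesis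
      using True unfolding ps_op_coeff_def c1 c2 idx(2) by (simp add: field_simps power_add)
  next
    case False
    then have "(m+n-j) choose (m-k) = 0" using \<open>k \<le> m\<close> assms by (simp add: binomial_eq_0)
    with False show ?thesis by simp
  qed
  have "(\<Sum>k\<le>m. if j \<le> n+k then (-1)^(n+k) / fact k * ps_op_coeff (n+k) j (m-k) else 0)
     = (-1)^(n+j) * fact n * (\<Sum>k\<le>m. (-1)^k * of_nat ((n+k) choose n) * of_nat ((m+n-j) choose (m-k)) :: 'k)"
    by (simp add: summand sum_distrib_left)
  also have "\<dots> = (-1)^(n+j) * fact n * (if m+n-j \<le> n then (-1)^m * of_nat ((m+n-(m+n-j)) choose m) else 0)"
    using alternating_choose_Vandermonde[of "m+n-j" m n] by simp
  also have "\<dots> = (if m \<le> j then ps_op_coeff n (m+n-j) m else 0)"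
  proof (cases "m \<le> j")
    case True
    then have idx: "m + n - (m + n - j) = j" "n - (m+n-j) = j - m" "m + (j - m) = j" using assms by auto
    have c: "(of_nat (j choose m) :: 'k) = fact j / (fact m * fact (j - m))"
      using True by (simp add: binomial_fact)
    have sign: "(-1::'k)^(m+n-j) = (-1)^(m+n+j)"
      using assms by (simp add: neg_one_power_add_eq_neg_one_power_diff)
    show ?thesis
      using True unfolding ps_op_coeff_def idx c sign by (simp add: field_simps power_add)
  qed simp
  finally show ?thesis .
qed

lemma choose_mult_ps_op_coeff_factor:
  assumes "l \<le> m - i" "l \<le> j" "i \<le> m" "j + i \<le> m + n"
  shows "of_nat (m choose (l+i)) * ps_op_coeff (m+n-(l+i)) (j-l) r * ps_op_coeff (l+i) i (j-l)
    = ((-1)^(i+j) * fact j * (fact m / fact (m-i)) * (fact (r + (m+n-i-j)) / fact r))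
       * ((-1)^l * of_nat ((m-i) choose l) * of_nat ((m-i+n-l) choose (j-l)) :: 'k::field_char_0)"
proof -
  obtain a where a: "m = i + l + a" using assms le_Suc_ex by (metis add.assoc le_add_diff_inverse)
  obtain b where b: "j = l + b" using assms le_Suc_ex by blast
  have "b \<le> a + n" using assms a b by simp
  then obtain e where e: "a + n = b + e" using le_Suc_ex by blast
  have idx: "m+n-(l+i) = a+n" "a + n - b = e" "m+n-i-j = e" "m - i = l + a"
    "m-i+n-l = a+n" "j - l = b" "m - (l+i) = a" "l + a - l = a" "l + a + n - l = a + n"
    using a b e by auto
  have c1: "(of_nat (m choose (l+i)) :: 'k) = fact m / (fact (l+i) * fact a)"
    using a by (simp add: binomial_fact idx)
  have c2: "(of_nat ((l+a) choose l) :: 'k) = fact (l+a) / (fact l * fact a)"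
    by (simp add: binomial_fact)
  have c3: "(of_nat ((a+n) choose b) :: 'k) = fact (a+n) / (fact b * fact e)"
    using binomial_fact[OF \<open>b \<le> a + n\<close>, where 'a='k] idx(2) by simp
  have "(-1::'k)^l * (-1)^l = 1"
    by (simp flip: power_add)
  then show ?thesis
    unfolding ps_op_coeff_def idx c1 c2 c3 by (simp add: field_simps power_add b)
qed

lemma ps_op_coeff_commutator_sum:
  assumes "i \<le> m" "j \<le> m + n"
  shows "(\<Sum>k\<le>m. if i \<le> k \<and> k-i \<le> j \<and> j+i \<le> m+n
             then of_nat (m choose k) * ps_op_coeff (m+n-k) (j-(k-i)) r * ps_op_coeff k i (j-(k-i))
             else 0)
    = (if j \<le> n then ps_op_coeff m i r * ps_op_coeff n j (r+(m-i)) else (0::'k::field_char_0))"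
proof (cases "j + i \<le> m + n")
  case False
  then show ?thesis using assms by auto
next
  case True
  define F where "F k = (of_nat (m choose k) * ps_op_coeff (m+n-k) (j-(k-i)) r * ps_op_coeff k i (j-(k-i)) :: 'k)" for k
  define Q where "Q = ((-1)^(i+j) * fact j * (fact m / fact (m-i)) * (fact (r + (m+n-i-j)) / fact r) :: 'k)"
  define X where "X l = ((-1)^l * of_nat ((m-i) choose l) * of_nat ((m-i+n-l) choose (j-l)) :: 'k)" for l
  have "(\<Sum>k\<le>m. (if i \<le> k \<and> k-i \<le> j \<and> j+i \<le> m+n then F k else 0))
      = (\<Sum>k\<in>{i..m}. (if k-i \<le> j then F k else 0))"
    by (rule sum.mono_neutral_cong_right) (use True in auto)
  also have "\<dots> = (\<Sum>l\<in>{0..m-i}. (if l \<le> j then F (l+i) else 0))"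
  proof -
    have "{i..m} = {0+i..(m-i)+i}" using assms by simp
    then show ?thesis by (simp only: sum.shift_bounds_cl_nat_ivl) simp
  qed
  also have "\<dots> = (\<Sum>l\<in>{0..m-i}. (if l \<le> j then Q * X l else 0))"
    by (rule sum.cong) (use choose_mult_ps_op_coeff_factor[of _ m i j n r] assms True
        in \<open>auto simp: F_def Q_def X_def\<close>)
  also have "\<dots> = (\<Sum>l\<in>{0..m-i} \<inter> {..j}. Q * X l)"
    by (simp only: sum.inter_restrict[OF finite_atLeastAtMost] atMost_iff)
  also have "\<dots> = (\<Sum>l\<le>j. Q * X l)"
    by (rule sum.mono_neutral_left) (auto simp: X_def binomial_eq_0)
  also have "\<dots> = Q * of_int (\<Sum>l\<le>j. (-1)^l * int ((m-i) choose l) * int ((m-i+n-l) choose (j-l)))"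
    by (simp add: X_def sum_distrib_left)
  also have "\<dots> = Q * of_nat (n choose j)"
    by (simp only: alternating_choose_convolution of_int_of_nat_eq)
  also have "\<dots> = (if j \<le> n then ps_op_coeff m i r * ps_op_coeff n j (r+(m-i)) else 0)"
  proof (cases "j \<le> n")
    case True
    then have "r + (m - i) + (n - j) = r + (m+n-i-j)" using assms by simp
    with True show ?thesis
      unfolding Q_def ps_op_coeff_def by (simp add: binomial_fact field_simps power_add)
  qed (simp add: binomial_eq_0)
  finally show ?thesis unfolding F_def .
qed

section \<open>Power series over a graded vector space\<close>

lemma mem_ps_grading: "f \<in> ps_grading L p \<longleftrightarrow> (\<forall>i. f i \<in> L p)"
  by (simp add: ps_grading_def)

lemma ps_T_funpow_apply: "(ps_T ^^ k) f r = (if k \<le> r then f (r - k) else (0::'v::zero))"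
  by (induction k arbitrary: r) (auto simp: ps_T_def)

lemma ps_carrierE:
  assumes "f \<in> ps_carrier L"
  obtains c P where "finite P" "\<And>p. c p \<in> ps_grading L p" "f = sum c P"
  using assms unfolding ps_carrier_def by blast

lemma vector_space_ps_smul:
  assumes "vector_space smul"
  shows "vector_space (ps_smul smul)"
proof -
  interpret module smul
    using assms by (simp add: module_iff_vector_space)
  show ?thesis
    unfolding vector_space_def ps_smul_def
    by (auto simp: fun_eq_iff scale_right_distrib scale_left_distrib)
qed

locale graded_vector_space =
  fixes smul :: "'k::field \<Rightarrow> 'v::ab_group_add \<Rightarrow> 'v" and L :: "int \<Rightarrow> 'v set"
  assumes graded: "graded_space smul UNIV L"
begin

abbreviation "V \<equiv> ps_carrier L"
abbreviation "W \<equiv> ps_grading L"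

lemma vector_space: "vector_space smul"
  using graded unfolding graded_space_def by blast

sublocale module smul
  using vector_space by (simp add: module_iff_vector_space)

lemma grade_zero: "0 \<in> L p"
  and grade_add: "x \<in> L p \<Longrightarrow> y \<in> L p \<Longrightarrow> x + y \<in> L p"
  and grade_smul: "x \<in> L p \<Longrightarrow> smul c x \<in> L p"
  using graded unfolding graded_space_def by blast+

lemma grade_sum: "(\<And>a. a \<in> A \<Longrightarrow> f a \<in> L p) \<Longrightarrow> sum f A \<in> L p"
  by (induction A rule: infinite_finite_induct) (auto intro: grade_zero grade_add)

lemma homogeneous_components_eq_zero:
  "finite {p. c p \<noteq> 0} \<Longrightarrow> \<forall>p. c p \<in> L p \<Longrightarrow> sum c {p. c p \<noteq> 0} = 0 \<Longrightarrow> c p = 0"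
  using graded unfolding graded_space_def by blast

lemma sum_homogeneous_in_ps_carrier:
  assumes "finite P" "\<And>p. p \<in> P \<Longrightarrow> c p \<in> W p"
  shows "sum c P \<in> V"
proof -
  define c' where "c' p = (if p \<in> P then c p else 0)" for p
  have supp: "{p. c' p \<noteq> 0} \<subseteq> P" by (auto simp: c'_def)
  then have "sum c P = sum c' {p. c' p \<noteq> 0}"
    by (auto simp: c'_def assms(1) intro: sum.mono_neutral_cong_right)
  moreover have "\<forall>p. c' p \<in> W p"
    using assms(2) by (auto simp: c'_def mem_ps_grading grade_zero)
  ultimately show ?thesis
    unfolding ps_carrier_def using supp assms(1) finite_subset by blast
qed

lemma zero_in_ps_carrier: "0 \<in> V"
  using sum_homogeneous_in_ps_carrier[of "{}"] by simp

lemma ps_grading_in_ps_carrier: "x \<in> W p \<Longrightarrow> x \<in> V"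
  using sum_homogeneous_in_ps_carrier[of "{p}" "\<lambda>_. x"] by simp

lemma ps_carrier_add:
  assumes "f \<in> V" "g \<in> V"
  shows "f + g \<in> V"
proof -
  obtain c P where c: "finite P" "\<And>p. c p \<in> W p" "f = sum c P"
    using assms(1) by (blast elim: ps_carrierE)
  obtain c' P' where c': "finite P'" "\<And>p. c' p \<in> W p" "g = sum c' P'"
    using assms(2) by (blast elim: ps_carrierE)
  have "f = (\<Sum>p\<in>P \<union> P'. if p \<in> P then c p else 0)" "g = (\<Sum>p\<in>P \<union> P'. if p \<in> P' then c' p else 0)"
    using c c' by (simp_all flip: sum.inter_restrict add: Int_absorb1 Int_absorb2)
  then have "f + g = (\<Sum>p\<in>P \<union> P'. (if p \<in> P then c p else 0) + (if p \<in> P' then c' p else 0))"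
    by (simp add: sum.distrib)
  also have "\<dots> \<in> V"
    by (rule sum_homogeneous_in_ps_carrier) (use c c' in \<open>auto simp: mem_ps_grading grade_zero grade_add\<close>)
  finally show ?thesis .
qed

lemma sum_in_ps_carrier: "(\<And>a. a \<in> A \<Longrightarrow> g a \<in> V) \<Longrightarrow> sum g A \<in> V"
  by (induction A rule: infinite_finite_induct) (auto intro: zero_in_ps_carrier ps_carrier_add)

lemma additive_image_in_ps_carrier:
  assumes add: "\<And>x y. h (x + y) = h x + h y" and hom: "\<And>p x. x \<in> W p \<Longrightarrow> h x \<in> V"
    and "f \<in> V"
  shows "h f \<in> V"
proof -
  interpret h: additive h by standard (rule add)
  obtain c P where c: "finite P" "\<And>p. c p \<in> W p" "f = sum c P"
    using \<open>f \<in> V\<close> by (blast elim: ps_carrierE)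
  have "h f = (\<Sum>p\<in>P. h (c p))" by (simp add: c h.sum)
  also have "\<dots> \<in> V" by (rule sum_in_ps_carrier) (use c hom in auto)
  finally show ?thesis .
qed

lemma lin_on_ps_carrier:
  assumes "\<And>x y. h (x + y) = h x + h y" "\<And>c x. h (ps_smul smul c x) = ps_smul smul c (h x)"
    and "\<And>p x. x \<in> W p \<Longrightarrow> h x \<in> V"
  shows "lin_on (ps_smul smul) V h"
  unfolding lin_on_def using assms additive_image_in_ps_carrier[of h] by blast

lemma ps_grading_components_eq_zero:
  assumes "finite {p. c p \<noteq> 0}" "\<forall>p. c p \<in> W p" "sum c {p. c p \<noteq> 0} = 0"
  shows "c p = 0"
proof
  fix i
  define c' where "c' p = c p i" for p
  have supp: "{p. c' p \<noteq> 0} \<subseteq> {p. c p \<noteq> 0}" by (auto simp: c'_def)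
  have "sum c' {p. c' p \<noteq> 0} = sum c' {p. c p \<noteq> 0}"
    by (rule sum.mono_neutral_left) (use assms(1) supp in \<open>auto simp: c'_def\<close>)
  also have "\<dots> = sum c {p. c p \<noteq> 0} i" by (simp add: sum_apply c'_def)
  finally have "sum c' {p. c' p \<noteq> 0} = 0" using assms(3) by simp
  moreover have "\<forall>p. c' p \<in> L p" using assms(2) by (auto simp: c'_def mem_ps_grading)
  ultimately have "c' p = 0"
    using supp assms(1) finite_subset homogeneous_components_eq_zero by blast
  then show "c p i = 0 i" by (simp add: c'_def)
qed

lemma graded_space_ps: "graded_space (ps_smul smul) V W"
proof -
  have "0 \<in> W p" "x \<in> W p \<Longrightarrow> y \<in> W p \<Longrightarrow> x + y \<in> W p"
    "x \<in> W p \<Longrightarrow> ps_smul smul c x \<in> W p" for p x y c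
    by (auto simp: mem_ps_grading ps_smul_def grade_zero grade_add grade_smul)
  then show ?thesis
    unfolding graded_space_def
    using vector_space_ps_smul[OF vector_space] ps_grading_components_eq_zero
    unfolding ps_carrier_def by blast
qed

end

section \<open>The products on power series over a dg Lie algebra\<close>

lemma psign_mult_self: "psign p * psign p = (1::'k::field)"
  by (simp add: psign_def)

locale dg_Lie = graded_vector_space smul L
  for smul :: "'k::field_char_0 \<Rightarrow> 'v::ab_group_add \<Rightarrow> 'v" and L +
  fixes d :: "'v \<Rightarrow> 'v" and br :: "'v \<Rightarrow> 'v \<Rightarrow> 'v"
  assumes d_linear: "lin_on smul UNIV d"
    and d_homogeneous: "x \<in> L p \<Longrightarrow> d x \<in> L (p + 1)"
    and d_d: "d (d x) = 0"
    and bracket_linear_right: "lin_on smul UNIV (br x)"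
    and bracket_linear_left: "lin_on smul UNIV (\<lambda>x. br x y)"
    and bracket_homogeneous: "x \<in> L p \<Longrightarrow> y \<in> L q \<Longrightarrow> br x y \<in> L (p + q)"
    and bracket_antisym: "x \<in> L p \<Longrightarrow> y \<in> L q \<Longrightarrow> br x y = - smul (psign (p * q)) (br y x)"
    and Jacobi: "x \<in> L p \<Longrightarrow> y \<in> L q \<Longrightarrow>
      br x (br y z) = br (br x y) z + smul (psign (p * q)) (br y (br x z))"
    and d_bracket: "x \<in> L p \<Longrightarrow> d (br x y) = br (d x) y + smul (psign p) (br x (d y))"

lemma dg_Lie_algebra_imp_dg_Lie: "dg_Lie_algebra smul L d br \<Longrightarrow> dg_Lie smul L d br"
  unfolding dg_Lie_algebra_def dg_Lie_def dg_Lie_axioms_def graded_vector_space_def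
  by (elim conjE; intro conjI allI impI; (blast | metis))

context dg_Lie
begin

lemma bracket_add_left: "br (x + y) z = br x z + br y z"
  and bracket_add_right: "br z (x + y) = br z x + br z y"
  and bracket_smul_left: "br (smul c x) y = smul c (br x y)"
  and bracket_smul_right: "br x (smul c y) = smul c (br x y)"
  and d_add: "d (x + y) = d x + d y"
  and d_smul: "d (smul c x) = smul c (d x)"
  using bracket_linear_left bracket_linear_right d_linear by (simp_all add: lin_on_def)

sublocale bracket_left: additive "\<lambda>x. br x y" by standard (rule bracket_add_left)
sublocale bracket_right: additive "br x" by standard (rule bracket_add_right)
sublocale d: additive d by standard (rule d_add)

abbreviation "op \<equiv> ps_op smul br"
abbreviation "S \<equiv> ps_smul smul"
abbreviation "D \<equiv> ps_d d"

lemma ps_op_apply: "op n f g r = (\<Sum>i\<le>n. smul (ps_op_coeff n i r) (br (f i) (g (r + (n-i)))))"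
  by (simp add: ps_op_def ps_op_coeff_def)

lemma ps_op_add_left: "op n (a + a') b = op n a b + op n a' b"
  and ps_op_add_right: "op n a (b + b') = op n a b + op n a b'"
  by (simp_all add: fun_eq_iff ps_op_def bracket_add_left bracket_add_right
      scale_right_distrib sum.distrib)

lemma ps_op_smul_left: "op n (S c a) b = S c (op n a b)"
  and ps_op_smul_right: "op n a (S c b) = S c (op n a b)"
  by (simp_all add: fun_eq_iff ps_op_apply ps_smul_def bracket_smul_left bracket_smul_right
      scale_sum_right mult.commute)

lemma ps_op_homogeneous: "a \<in> W p \<Longrightarrow> b \<in> W q \<Longrightarrow> op n a b \<in> W (p + q)"
  unfolding mem_ps_grading ps_op_def by (auto intro!: grade_sum grade_smul bracket_homogeneous)

lemma ps_op_in_ps_carrier: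
  assumes "a \<in> V" "b \<in> V"
  shows "op n a b \<in> V"
proof -
  have "op n x b \<in> V" if "x \<in> W p" for x p
    using ps_op_add_right ps_grading_in_ps_carrier[OF ps_op_homogeneous[OF that]] assms(2)
    by (rule additive_image_in_ps_carrier)
  with ps_op_add_left show ?thesis
    using assms(1) by (rule additive_image_in_ps_carrier)
qed

lemma lin_on_ps_op_right: "a \<in> V \<Longrightarrow> lin_on S V (op n a)"
  and lin_on_ps_op_left: "b \<in> V \<Longrightarrow> lin_on S V (\<lambda>a. op n a b)"
  unfolding lin_on_def using ps_op_in_ps_carrier ps_op_add_left ps_op_add_right
    ps_op_smul_left ps_op_smul_right by blast+

lemma ps_d_homogeneous: "x \<in> W p \<Longrightarrow> D x \<in> W (p + 1)"
  by (simp add: mem_ps_grading ps_d_def d_homogeneous)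

lemma lin_on_ps_d: "lin_on S V D"
proof (rule lin_on_ps_carrier)
  show "D x \<in> V" if "x \<in> W p" for p x
    using ps_grading_in_ps_carrier[OF ps_d_homogeneous[OF that]] .
qed (simp_all add: fun_eq_iff ps_d_def ps_smul_def d_add d_smul)

lemma ps_d_ps_d: "D (D x) = 0"
  by (simp add: fun_eq_iff ps_d_def d_d)

lemma ps_T_homogeneous: "x \<in> W p \<Longrightarrow> ps_T x \<in> W p"
  by (simp add: mem_ps_grading ps_T_def grade_zero)

lemma lin_on_ps_T: "lin_on S V ps_T"
proof (rule lin_on_ps_carrier)
  show "ps_T x \<in> V" if "x \<in> W p" for p x
    using ps_grading_in_ps_carrier[OF ps_T_homogeneous[OF that]] .
qed (simp_all add: fun_eq_iff ps_T_def ps_smul_def)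

lemma ps_T_ps_d: "ps_T (D x) = D (ps_T x)"
  by (simp add: fun_eq_iff ps_d_def ps_T_def d.zero)

lemma ps_op_ps_T_left: "op n (ps_T a) b = S (- of_nat n) (op (n - 1) a b)"
proof (cases n)
  case 0
  then show ?thesis
    by (simp add: fun_eq_iff ps_op_apply ps_T_def ps_smul_def bracket_left.zero)
next
  case (Suc n')
  show ?thesis
  proof
    fix r
    have "op n (ps_T a) b r = (\<Sum>i\<le>n'. smul (ps_op_coeff (Suc n') (Suc i) r) (br (a i) (b (r + (n' - i)))))"
      unfolding ps_op_apply Suc
      by (subst sum.atMost_Suc_shift) (simp add: ps_T_def bracket_left.zero)
    also have "\<dots> = (\<Sum>i\<le>n'. smul (- of_nat (Suc n')) (smul (ps_op_coeff n' i r) (br (a i) (b (r + (n' - i))))))"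
      by (rule sum.cong) (simp_all add: ps_op_coeff_Suc)
    also have "\<dots> = S (- of_nat n) (op (n - 1) a b) r"
      by (simp add: ps_op_apply ps_smul_def scale_sum_right Suc)
    finally show "op n (ps_T a) b r = S (- of_nat n) (op (n - 1) a b) r" .
  qed
qed

lemma ps_d_ps_op:
  assumes "a \<in> W p"
  shows "D (op n a b) - S (psign p) (op n a (D b)) = op n (D a) b"
proof
  fix r
  have "d (br (a i) y) = br (d (a i)) y + smul (psign p) (br (a i) (d y))" for i y
    using assms by (simp add: mem_ps_grading d_bracket)
  then show "(D (op n a b) - S (psign p) (op n a (D b))) r = op n (D a) b r"
    by (simp add: ps_op_apply ps_d_def ps_smul_def d.sum d_smul scale_right_distrib sum.distrib
        scale_sum_right scale_left_commute[of "psign p"] mult.commute[of _ "psign p"])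
qed

lemma finite_ps_op_nonzero:
  assumes "finite {i. a i \<noteq> 0}" "finite {j. b j \<noteq> 0}"
  shows "finite {n. op n a b \<noteq> 0}"
proof -
  obtain I where I: "\<And>i. a i \<noteq> 0 \<Longrightarrow> i < I"
    using assms(1) finite_nat_set_iff_bounded by auto
  obtain J where J: "\<And>j. b j \<noteq> 0 \<Longrightarrow> j < J"
    using assms(2) finite_nat_set_iff_bounded by auto
  have "op n a b = 0" if "I + J \<le> n" for n
  proof
    fix r
    have "br (a i) (b (r + (n - i))) = 0" if "i \<le> n" for i
    proof (cases "i < I")
      case True
      then have "b (r + (n - i)) = 0" using J[of "r + (n - i)"] \<open>I + J \<le> n\<close> that by fastforce
      then show ?thesis by (simp add: bracket_right.zero)
    next
      case False
      then have "a i = 0" using I by fastforce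
      then show ?thesis by (simp add: bracket_left.zero)
    qed
    then show "op n a b r = 0 r" by (simp add: ps_op_apply)
  qed
  then have "{n. op n a b \<noteq> 0} \<subseteq> {..<I+J}" by (auto simp: not_less[symmetric])
  then show ?thesis using finite_subset by blast
qed

lemma ps_op_swap_apply:
  assumes "a \<in> W p" "b \<in> W q"
  shows "smul (psign (p * q)) (op N b a r)
    = - (\<Sum>j\<le>N. smul (ps_op_coeff N j r) (br (a (r + (N - j))) (b j)))"
proof -
  have swap: "smul (psign (p * q)) (br (b j) (a x)) = - br (a x) (b j)" for j x
  proof -
    have "br (b j) (a x) = - smul (psign (p * q)) (br (a x) (b j))"
      using assms bracket_antisym[of "b j" q "a x" p] by (simp add: mem_ps_grading mult.commute)
    then show ?thesis by (simp add: scale_right_diff_distrib psign_mult_self)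
  qed
  have "smul (psign (p * q)) (op N b a r)
      = (\<Sum>j\<le>N. smul (ps_op_coeff N j r) (smul (psign (p * q)) (br (b j) (a (r + (N - j))))))"
    unfolding ps_op_apply scale_sum_right by (rule sum.cong[OF refl]) (rule scale_left_commute)
  then show ?thesis
    by (simp add: swap sum_negf)
qed

lemma ps_op_skew_term_apply:
  assumes a: "a \<in> W p" and b: "b \<in> W q" and "k \<le> m"
  shows "smul (psign (p * q) * (-1)^(n+k+1) / fact k) (op (n+k) b a (m-k))
    = (\<Sum>j\<le>m+n. if j \<le> n+k
         then smul ((-1)^(n+k) / fact k * ps_op_coeff (n+k) j (m-k)) (br (a (m+n-j)) (b j)) else 0)"
proof -
  have "smul (psign (p * q) * (-1)^(n+k+1) / fact k) (op (n+k) b a (m-k))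
      = smul ((-1)^(n+k+1) / fact k) (smul (psign (p * q)) (op (n+k) b a (m-k)))"
    by (simp add: mult.commute)
  also have "\<dots> = (\<Sum>j\<le>n+k. smul ((-1)^(n+k) / fact k * ps_op_coeff (n+k) j (m-k)) (br (a (m+n-j)) (b j)))"
    unfolding ps_op_swap_apply[OF a b] scale_minus_right scale_sum_right sum_negf[symmetric]
  proof (rule sum.cong[OF refl])
    fix j assume "j \<in> {..n+k}"
    then have "m - k + (n + k - j) = m + n - j" using \<open>k \<le> m\<close> by auto
    moreover have "(-1)^(n+k) / fact k * ps_op_coeff (n+k) j (m-k)
        = - ((-1)^(n+k+1) / fact k) * (ps_op_coeff (n+k) j (m-k) :: 'k)"
      by simp
    ultimately show "- smul ((-1)^(n+k+1) / fact k)
          (smul (ps_op_coeff (n+k) j (m-k)) (br (a (m - k + (n + k - j))) (b j)))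
        = smul ((-1)^(n+k) / fact k * ps_op_coeff (n+k) j (m-k)) (br (a (m+n-j)) (b j))"
      by simp
  qed
  also have "\<dots> = (\<Sum>j\<le>m+n. if j \<le> n+k
      then smul ((-1)^(n+k) / fact k * ps_op_coeff (n+k) j (m-k)) (br (a (m+n-j)) (b j)) else 0)"
    by (rule sum_atMost_extend) (use \<open>k \<le> m\<close> in simp)
  finally show ?thesis .
qed

lemma ps_op_skew_apply:
  assumes a: "a \<in> W p" and b: "b \<in> W q"
  shows "op n a b m = (\<Sum>k\<le>m. smul (psign (p * q) * (-1)^(n+k+1) / fact k) (op (n+k) b a (m-k)))"
proof -
  define E where "E j = br (a (m+n-j)) (b j)" for j
  define g where "g k j = ((-1)^(n+k) / fact k * ps_op_coeff (n+k) j (m-k) :: 'k)" for k j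
  have "(\<Sum>k\<le>m. smul (psign (p * q) * (-1)^(n+k+1) / fact k) (op (n+k) b a (m-k)))
      = (\<Sum>k\<le>m. \<Sum>j\<le>m+n. if j \<le> n+k then smul (g k j) (E j) else 0)"
    by (rule sum.cong[OF refl]) (simp only: ps_op_skew_term_apply[OF a b] atMost_iff g_def E_def)
  also have "\<dots> = (\<Sum>j\<le>m+n. \<Sum>k\<le>m. if j \<le> n+k then smul (g k j) (E j) else 0)"
    by (rule sum.swap)
  also have "\<dots> = (\<Sum>j\<le>m+n. smul (\<Sum>k\<le>m. if j \<le> n+k then g k j else 0) (E j))"
    by (simp add: scale_sum_left if_distrib[of "\<lambda>c. smul c _"] cong: if_cong)
  also have "\<dots> = (\<Sum>j\<le>m+n. smul (if m \<le> j then ps_op_coeff n (m+n-j) m else 0) (E j))"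
    by (rule sum.cong[OF refl]) (simp only: g_def ps_op_coeff_skew_sum atMost_iff)
  also have "\<dots> = (\<Sum>i\<le>m+n. if i \<le> n then smul (ps_op_coeff n i m) (br (a i) (b (m + (n-i)))) else 0)"
    by (subst sum_atMost_reverse) (rule sum.cong, auto simp: E_def)
  also have "\<dots> = op n a b m"
    by (simp add: ps_op_apply sum_atMost_extend[of n "m+n", symmetric])
  finally show ?thesis by simp
qed

lemma ps_op_skew_symmetry:
  assumes "a \<in> W p" "b \<in> W q"
  shows "ps_has_sum (\<lambda>k. S (psign (p * q) * (-1) ^ (n + k + 1) / fact k) ((ps_T ^^ k) (op (n + k) b a)))
    (op n a b)"
  unfolding ps_has_sum_def
proof
  fix m
  let ?c = "\<lambda>k. S (psign (p * q) * (-1) ^ (n + k + 1) / fact k) ((ps_T ^^ k) (op (n + k) b a)) m"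
  have supp: "{k. ?c k \<noteq> 0} \<subseteq> {..m}"
    by (auto simp: ps_smul_def ps_T_funpow_apply split: if_splits)
  have "(\<Sum>k | ?c k \<noteq> 0. ?c k) = (\<Sum>k\<le>m. ?c k)"
    by (rule sum.mono_neutral_left) (use supp in auto)
  also have "\<dots> = op n a b m"
    by (simp add: ps_op_skew_apply[OF assms] ps_smul_def ps_T_funpow_apply)
  finally show "finite {k. ?c k \<noteq> 0} \<and> op n a b m = (\<Sum>k | ?c k \<noteq> 0. ?c k)"
    using supp finite_subset by fastforce
qed


lemma ps_op_nested_right_apply:
  "op m a (op n b c) r = (\<Sum>i\<le>m. \<Sum>j\<le>n. smul (ps_op_coeff m i r * ps_op_coeff n j (r+(m-i)))
      (br (a i) (br (b j) (c (r+(m-i)+(n-j))))))"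
  by (simp add: ps_op_apply bracket_right.sum scale_sum_right bracket_smul_right)

lemma ps_op_nested_left_apply:
  "op N (op k a b) c r = (\<Sum>u\<le>N. \<Sum>i\<le>k. smul (ps_op_coeff N u r * ps_op_coeff k i u)
      (br (br (a i) (b (u+(k-i)))) (c (r+(N-u)))))"
  by (simp add: ps_op_apply bracket_left.sum scale_sum_right bracket_smul_left)

lemma ps_op_graded_commutator_apply:
  assumes a: "a \<in> W p" and b: "b \<in> W q"
  shows "(op m a (op n b c) - S (psign (p * q)) (op n b (op m a c))) r
    = (\<Sum>i\<le>m. \<Sum>j\<le>n. smul (ps_op_coeff m i r * ps_op_coeff n j (r+(m-i)))
        (br (br (a i) (b j)) (c (r+(m-i)+(n-j)))))"
proof -
  let ?s = "psign (p * q) :: 'k"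
  define K where "K i j = (ps_op_coeff m i r * ps_op_coeff n j (r+(m-i)) :: 'k)" for i j
  define z where "z i j = c (r+(m-i)+(n-j))" for i j
  have Jacobi_coeff: "br (a i) (br (b j) w) - smul ?s (br (b j) (br (a i) w)) = br (br (a i) (b j)) w" for i j w
    using Jacobi[of "a i" p "b j" q w] a b by (simp add: mem_ps_grading)
  have left: "op m a (op n b c) r = (\<Sum>i\<le>m. \<Sum>j\<le>n. smul (K i j) (br (a i) (br (b j) (z i j))))"
    by (simp only: ps_op_nested_right_apply K_def z_def)
  have "op n b (op m a c) r = (\<Sum>j\<le>n. \<Sum>i\<le>m. smul (K i j) (br (b j) (br (a i) (z i j))))"
  proof -
    have "ps_op_coeff n j r * ps_op_coeff m i (r+(n-j)) = (K i j :: 'k)" for i j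
      unfolding K_def ps_op_coeff_def by (simp add: field_simps ac_simps)
    moreover have "r+(n-j)+(m-i) = r+(m-i)+(n-j)" for i j by simp
    ultimately show ?thesis by (simp only: ps_op_nested_right_apply z_def)
  qed
  also have "\<dots> = (\<Sum>i\<le>m. \<Sum>j\<le>n. smul (K i j) (br (b j) (br (a i) (z i j))))"
    by (rule sum.swap)
  finally have right: "smul ?s (op n b (op m a c) r)
      = (\<Sum>i\<le>m. \<Sum>j\<le>n. smul (K i j) (smul ?s (br (b j) (br (a i) (z i j)))))"
    by (simp only: scale_sum_right scale_left_commute[of ?s])
  have "(op m a (op n b c) - S ?s (op n b (op m a c))) r
     = (\<Sum>i\<le>m. \<Sum>j\<le>n. smul (K i j) (br (a i) (br (b j) (z i j))))
       - (\<Sum>i\<le>m. \<Sum>j\<le>n. smul (K i j) (smul ?s (br (b j) (br (a i) (z i j)))))"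
    by (simp only: minus_apply ps_smul_def left right)
  also have "\<dots> = (\<Sum>i\<le>m. \<Sum>j\<le>n. smul (K i j) (br (br (a i) (b j)) (z i j)))"
    by (simp only: sum_subtractf[symmetric] scale_right_diff_distrib[symmetric] Jacobi_coeff)
  finally show ?thesis by (simp only: K_def z_def)
qed

lemma sum_choose_ps_op_nested_left_collect:
  "(\<Sum>k\<le>m. S (of_nat (m choose k)) (op (m+n-k) (op k a b) c)) r
    = (\<Sum>i\<le>m. \<Sum>j\<le>m+n. smul
        (\<Sum>k\<le>m. if i \<le> k \<and> k-i \<le> j \<and> j+i \<le> m+n
           then of_nat (m choose k) * ps_op_coeff (m+n-k) (j-(k-i)) r * ps_op_coeff k i (j-(k-i)) else 0)
        (br (br (a i) (b j)) (c (r+(m+n-i-j)))))"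
proof -
  define \<Phi> where "\<Phi> k u i = smul (of_nat (m choose k) * ps_op_coeff (m+n-k) u r * ps_op_coeff k i u)
      (br (br (a i) (b (u+(k-i)))) (c (r+(m+n-k-u))))" for k u i
  have factor: "(if i \<le> k \<and> k-i \<le> j \<and> j+i \<le> m+n then \<Phi> k (j-(k-i)) i else 0)
      = smul (if i \<le> k \<and> k-i \<le> j \<and> j+i \<le> m+n
           then of_nat (m choose k) * ps_op_coeff (m+n-k) (j-(k-i)) r * ps_op_coeff k i (j-(k-i)) else 0)
          (br (br (a i) (b j)) (c (r+(m+n-i-j))))" for i j k
  proof (cases "i \<le> k \<and> k-i \<le> j \<and> j+i \<le> m+n")
    case True
    then have idx: "j - (k - i) + (k - i) = j" "m + n - k - (j - (k - i)) = m+n-i-j" by auto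
    show ?thesis unfolding \<Phi>_def if_P[OF True] idx ..
  next
    case False
    show ?thesis unfolding if_not_P[OF False] by simp
  qed
  have "(\<Sum>k\<le>m. S (of_nat (m choose k)) (op (m+n-k) (op k a b) c)) r
     = (\<Sum>k\<le>m. \<Sum>u\<le>m+n-k. \<Sum>i\<le>k. \<Phi> k u i)"
    by (simp add: sum_apply ps_smul_def ps_op_nested_left_apply scale_sum_right \<Phi>_def mult.assoc)
  also have "\<dots> = (\<Sum>i\<le>m. \<Sum>j\<le>m+n. \<Sum>k\<le>m.
      if i \<le> k \<and> k-i \<le> j \<and> j+i \<le> m+n then \<Phi> k (j-(k-i)) i else 0)"
    by (rule sum_triangle_reindex)
  finally show ?thesis
    by (simp only: factor scale_sum_left)
qed

lemma sum_choose_ps_op_nested_left_apply: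
  "(\<Sum>k\<le>m. S (of_nat (m choose k)) (op (m+n-k) (op k a b) c)) r
    = (\<Sum>i\<le>m. \<Sum>j\<le>n. smul (ps_op_coeff m i r * ps_op_coeff n j (r+(m-i)))
        (br (br (a i) (b j)) (c (r+(m-i)+(n-j)))))"
proof -
  define K where "K i j = (ps_op_coeff m i r * ps_op_coeff n j (r+(m-i)) :: 'k)" for i j
  define F where "F i j = br (br (a i) (b j)) (c (r+(m+n-i-j)))" for i j
  have "(\<Sum>k\<le>m. S (of_nat (m choose k)) (op (m+n-k) (op k a b) c)) r
      = (\<Sum>i\<le>m. \<Sum>j\<le>m+n. if j \<le> n then smul (K i j) (F i j) else 0)"
    unfolding sum_choose_ps_op_nested_left_collect F_def[symmetric]
  proof (rule sum.cong[OF refl], rule sum.cong[OF refl])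
    fix i j assume "i \<in> {..m}" "j \<in> {..m+n}"
    then show "smul (\<Sum>k\<le>m. if i \<le> k \<and> k-i \<le> j \<and> j+i \<le> m+n
           then of_nat (m choose k) * ps_op_coeff (m+n-k) (j-(k-i)) r * ps_op_coeff k i (j-(k-i)) else 0)
          (F i j)
        = (if j \<le> n then smul (K i j) (F i j) else 0)"
      by (simp add: ps_op_coeff_commutator_sum K_def)
  qed
  also have "\<dots> = (\<Sum>i\<le>m. \<Sum>j\<le>n. smul (K i j) (F i j))"
    by (rule sum.cong[OF refl], rule sum_atMost_extend[symmetric]) simp
  also have "\<dots> = (\<Sum>i\<le>m. \<Sum>j\<le>n. smul (K i j) (br (br (a i) (b j)) (c (r+(m-i)+(n-j)))))"
  proof (rule sum.cong[OF refl], rule sum.cong[OF refl])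
    fix i j assume "i \<in> {..m}" "j \<in> {..n}"
    then have "r + (m+n-i-j) = r+(m-i)+(n-j)" by auto
    then show "smul (K i j) (F i j) = smul (K i j) (br (br (a i) (b j)) (c (r+(m-i)+(n-j))))"
      by (simp only: F_def)
  qed
  finally show ?thesis by (simp only: K_def)
qed

lemma ps_op_commutator:
  assumes "a \<in> W p" "b \<in> W q"
  shows "op m a (op n b c) - S (psign (p * q)) (op n b (op m a c))
    = (\<Sum>k\<le>m. S (of_nat (m choose k)) (op (m + n - k) (op k a b) c))"
  using ps_op_graded_commutator_apply[OF assms] sum_choose_ps_op_nested_left_apply
  by (simp add: fun_eq_iff)

end

theorem lemma4p30:
  fixes smul :: "'k::field_char_0 \<Rightarrow> 'v::ab_group_add \<Rightarrow> 'v"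
    and L :: "int \<Rightarrow> 'v set" and d :: "'v \<Rightarrow> 'v" and br :: "'v \<Rightarrow> 'v \<Rightarrow> 'v"
  assumes "dg_Lie_algebra smul L d br"
  shows "dg_vertex_Lie_axioms (ps_smul smul) (ps_carrier L) (ps_grading L) (ps_d d) ps_T
           (ps_op smul br) ps_has_sum
       \<and> (\<forall>a\<in>ps_carrier L. \<forall>b\<in>ps_carrier L. finite {i. a i \<noteq> 0} \<longrightarrow> finite {j. b j \<noteq> 0} \<longrightarrow>
            finite {n. ps_op smul br n a b \<noteq> 0})"
proof -
  interpret dg_Lie smul L d br
    using assms by (rule dg_Lie_algebra_imp_dg_Lie)
  show ?thesis
    unfolding dg_vertex_Lie_axioms_def
    by (intro conjI allI ballI impI)
      (assumption | rule graded_space_ps lin_on_ps_d ps_d_homogeneous ps_d_ps_d lin_on_ps_T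
        ps_T_homogeneous ps_T_ps_d lin_on_ps_op_right lin_on_ps_op_left ps_op_homogeneous
        ps_op_ps_T_left ps_op_skew_symmetry ps_op_commutator ps_d_ps_op finite_ps_op_nonzero)+
qed

end
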